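(* Let $r\ge1$, $\mu\in\mathcal P_r$, and let $\mathbf x_n\in\Xi_n$ for every $n\in\mathbb N$. Let $d_r(\delta^\bullet_{\mathbf x_n},\mu)=\min_{\mathbf p\in\Pi_n}d_r(\delta^{\mathbf p}_{\mathbf x_n},\mu)$. Then $\lim_{n\to\infty}d_r(\delta^\bullet_{\mathbf x_n},\mu)=0$ if and only if $$\lim_{n\to\infty}\min_{1\le i\le n}|x-x_{n,i}|=0\quad\text{for every }x\in{\rm supp}\,\mu .$$ In particular, this condition holds whenever $\lim_{n\to\infty}\big(F_\mu(x_{n,1})+\max_{1\le i\le n-1}(x_{n,i+1}-x_{n,i})+1-F_\mu(x_{n,n})\big)=0$.
   Context: $\mathcal P$ denotes the set of Borel probability measures on $\mathbb R$; $\mathcal P_r=\{\mu\in\mathcal P:\int|x|^r{\rm d}\mu(x)<\infty\}$. For $\mu\in\mathcal P$, $F_\mu(x)=\mu(]-\infty,x])$ and $F_\mu^{-1}(t)=\sup\{x: F_\mu(x)\le t\}$, $t\in]0,1[$; ${\rm supp}\,\mu$ is the support (smallest closed set of full measure). $d_r(\mu,\nu)=\big(\int_0^1|F_\mu^{-1}(t)-F_\nu^{-1}(t)|^r{\rm d}t\big)^{1/r}$ on $\mathcal P_r$. $\Xi_n=\{\mathbf x\in\mathbb R^n:x_1\le\dots\le x_n\}$, $\Pi_n=\{\mathbf p\in\mathbb R^n:p_i\ge0,\sum_ip_i=1\}$, $\delta^{\mathbf p}_{\mathbf x}=\sum_{i=1}^np_i\delta_{x_i}$; the minimum over $\Pi_n$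 is attained. *)

theory Defs
  imports "HOL-Probability.Probability"
begin

definition prob_real :: "real measure \<Rightarrow> bool" where
  "prob_real M \<longleftrightarrow> prob_space M \<and> sets M = sets borel"

definition prob_moment :: "real \<Rightarrow> real measure \<Rightarrow> bool" where
  "prob_moment r M \<longleftrightarrow> prob_real M \<and> integrable M (\<lambda>x. \<bar>x\<bar> powr r)"

definition cdf_of :: "real measure \<Rightarrow> real \<Rightarrow> real" where
  "cdf_of M x = measure M {..x}"

definition quantile_of :: "real measure \<Rightarrow> real \<Rightarrow> real" where
  "quantile_of M t = Sup {x. cdf_of M x \<le> t}"

definition supp_of :: "real measure \<Rightarrow> real set" where
  "supp_of M = \<Inter> {S. closed S \<and> S \<in> sets M \<and> measure M (space M - S) = 0}"

text \<open>The L^r-Wasserstein distance d_r via quantile functions.\<close>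
definition dist_r :: "real \<Rightarrow> real measure \<Rightarrow> real measure \<Rightarrow> real" where
  "dist_r r M N =
     (LINT t:{0<..<1}|lborel. \<bar>quantile_of M t - quantile_of N t\<bar> powr r) powr (1 / r)"

definition Xi :: "nat \<Rightarrow> (nat \<Rightarrow> real) set" where
  "Xi n = {x. \<forall>i j. 1 \<le> i \<longrightarrow> i \<le> j \<longrightarrow> j \<le> n \<longrightarrow> x i \<le> x j}"

definition Pi_simplex :: "nat \<Rightarrow> (nat \<Rightarrow> real) set" where
  "Pi_simplex n = {p. (\<forall>i\<in>{1..n}. p i \<ge> 0) \<and> (\<Sum>i=1..n. p i) = 1}"

definition delta_meas :: "nat \<Rightarrow> (nat \<Rightarrow> real) \<Rightarrow> (nat \<Rightarrow> real) \<Rightarrow> real measure" where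
  "delta_meas n p x = measure_of UNIV (sets borel)
      (\<lambda>A. \<Sum>i=1..n. ennreal (p i) * indicator A (x i))"

text \<open>Best approximation by measures supported on the points x_1..x_n
  (the minimum over Pi_n is attained, so it equals the infimum).\<close>
definition dist_r_best :: "real \<Rightarrow> nat \<Rightarrow> (nat \<Rightarrow> real) \<Rightarrow> real measure \<Rightarrow> real" where
  "dist_r_best r n x M = (INF p \<in> Pi_simplex n. dist_r r (delta_meas n p x) M)"

end

theory Submission
  imports Defs
begin

text \<open>Compare \<mu> with a discrete measure \<nu> through their quantile functions Q, i.e. compare
  Q_\<nu>(t) with Q_\<mu>(t) for t uniform on ]0,1[. If a support point y of \<mu> keeps distance
  at least e from all the points x_{n,i}, then Q_\<nu>(t) avoids ]y - e, y + e[ for every \<nu> carried by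
  these points, whereas Q_\<mu>(t) lies in [y - e/2, y + e/2] for t in an interval of positive length
  F(y + e/2) - F(y - e/2); so d_r stays bounded away from 0.
  Conversely, give x_i the \<mu>-mass between the midpoints of its two neighbouring gaps. Then
  |Q_\<nu>(t) - Q_\<mu>(t)| is at most the distance from Q_\<mu>(t) to the points, and since Q_\<mu>(t) always lies
  in the support these distances tend to 0; they are dominated in L^r, so dominated convergence
  applies. Under the final condition the points reach beyond both ends of the support with
  gaps tending to 0, so they approach every point of the support.\<close>

lemma cdf_of_eq_cdf: "cdf_of M = cdf M"
  by (simp add: cdf_of_def cdf_def fun_eq_iff)

lemma prob_real_imp_real_distribution: "prob_real M \<Longrightarrow> real_distribution M"
  unfolding prob_real_def real_distribution_def real_distribution_axioms_def by simp

section \<open>Quantile functions\<close>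

context real_distribution
begin

lemma ex_cdf_le: assumes "0 < t" shows "\<exists>x. cdf M x \<le> t"
proof -
  have "eventually (\<lambda>x. cdf M x < t) at_bot"
    using order_tendstoD(2)[OF cdf_lim_at_bot assms] .
  then obtain b where "\<And>x. x \<le> b \<Longrightarrow> cdf M x < t" by (auto simp: eventually_at_bot_linorder)
  then show ?thesis by (meson less_imp_le order_refl)
qed

lemma bdd_above_cdf_le: assumes "t < 1" shows "bdd_above {x. cdf M x \<le> t}"
proof -
  have "eventually (\<lambda>x. cdf M x > t) at_top"
    using order_tendstoD(1)[OF cdf_lim_at_top_prob assms] .
  then obtain b where b: "\<And>x. x \<ge> b \<Longrightarrow> cdf M x > t" by (auto simp: eventually_at_top_linorder)
  show ?thesis
  proof (rule bdd_aboveI[of _ b])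
    fix x assume "x \<in> {x. cdf M x \<le> t}"
    then show "x \<le> b" using b[of x] by (cases "x \<ge> b") auto
  qed
qed

lemma le_quantile_of: assumes "0 < t" "t < 1" "cdf M x \<le> t" shows "x \<le> quantile_of M t"
  unfolding quantile_of_def cdf_of_eq_cdf using assms bdd_above_cdf_le by (auto intro!: cSup_upper)

lemma quantile_of_le: assumes "0 < t" "t < 1" "t < cdf M x" shows "quantile_of M t \<le> x"
  unfolding quantile_of_def cdf_of_eq_cdf
proof (rule cSup_least)
  show "{x. cdf M x \<le> t} \<noteq> {}" using ex_cdf_le[OF assms(1)] by auto
  fix s assume "s \<in> {x. cdf M x \<le> t}"
  then have "cdf M s < cdf M x" using assms by auto
  then show "s \<le> x" using cdf_nondecreasing by (meson linorder_not_le less_le_not_le)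
qed

lemma cdf_gt_if_quantile_of_less:
  assumes "0 < t" "t < 1" "quantile_of M t < x" shows "t < cdf M x"
  using le_quantile_of[OF assms(1,2), of x] assms(3) by fastforce

lemma cdf_le_if_less_quantile_of:
  assumes "0 < t" "t < 1" "x < quantile_of M t" shows "cdf M x \<le> t"
  using quantile_of_le[OF assms(1,2), of x] assms(3) by fastforce

lemma mono_on_quantile_of: "mono_on {0<..<1} (quantile_of M)"
proof (rule mono_onI)
  fix s t :: real assume st: "s \<in> {0<..<1}" "t \<in> {0<..<1}" "s \<le> t"
  show "quantile_of M s \<le> quantile_of M t"
  proof (rule ccontr)
    assume "\<not> ?thesis"
    then obtain z where z: "quantile_of M t < z" "z < quantile_of M s" using dense by (meson not_le)
    have "t < cdf M z" using cdf_gt_if_quantile_of_less z st by auto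
    moreover have "cdf M z \<le> s" using cdf_le_if_less_quantile_of z st by auto
    ultimately show False using st by auto
  qed
qed

lemma quantile_of_notin_flat_interval:
  assumes flat: "\<And>u v. u \<in> {a<..<b} \<Longrightarrow> v \<in> {a<..<b} \<Longrightarrow> cdf M u = cdf M v"
    and t: "0 < t" "t < 1"
  shows "quantile_of M t \<notin> {a<..<b}"
proof
  let ?z = "quantile_of M t"
  assume z: "?z \<in> {a<..<b}"
  show False
  proof (cases "cdf M ?z \<le> t")
    case True
    define w where "w = (?z + b) / 2"
    have "w \<in> {a<..<b}" "w > ?z" using z by (auto simp: w_def)
    then have "cdf M w \<le> t" using flat[OF z] True by auto
    then show False using le_quantile_of[OF t] \<open>w > ?z\<close> by fastforce
  next
    case False
    define w where "w = (?z + a) / 2"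
    have "w \<in> {a<..<b}" "w < ?z" using z by (auto simp: w_def)
    then have "t < cdf M w" using flat[OF z] False by auto
    then show False using quantile_of_le[OF t] \<open>w < ?z\<close> by fastforce
  qed
qed

lemma cdf_eq_on_null_interval:
  assumes "measure M {a<..<b} = 0" "u \<in> {a<..<b}" "v \<in> {a<..<b}"
  shows "cdf M u = cdf M v"
proof -
  have *: "cdf M v = cdf M u" if "u < v" "u \<in> {a<..<b}" "v \<in> {a<..<b}" for u v
  proof -
    have "cdf M v - cdf M u = measure M {u<..v}" using cdf_diff_eq that by auto
    also have "\<dots> \<le> measure M {a<..<b}"
      by (rule finite_measure_mono) (use that in auto)
    finally show ?thesis using assms(1) cdf_nondecreasing[of u v] that by auto
  qed
  show ?thesis using *[of u v] *[of v u] assms(2,3) by (cases u v rule: linorder_cases) auto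
qed

lemma notin_supp_imp_null_interval:
  assumes "z \<notin> supp_of M"
  obtains e where "e > 0" "measure M {z-e<..<z+e} = 0"
proof -
  obtain S where S: "closed S" "S \<in> sets M" "measure M (space M - S) = 0" "z \<notin> S"
    using assms unfolding supp_of_def by auto
  then obtain e where e: "e > 0" "ball z e \<subseteq> - S"
    by (meson ComplI open_Compl open_contains_ball)
  have "{z-e<..<z+e} \<subseteq> space M - S"
    using e by (auto simp: dist_real_def subset_eq)
  then have "measure M {z-e<..<z+e} \<le> measure M (space M - S)"
    by (rule finite_measure_mono) (use S in auto)
  then show ?thesis using that e S(3) by (simp add: measure_nonneg antisym)
qed

lemma measure_interval_pos_if_in_supp:
  assumes y: "y \<in> supp_of M" and e: "e > 0"
  shows "measure M {y-e<..<y+e} > 0"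
proof (rule ccontr)
  assume "\<not> ?thesis"
  then have null: "measure M (space M - (- {y-e<..<y+e})) = 0"
    using measure_nonneg[of M] by (simp add: antisym not_less)
  have "supp_of M \<subseteq> - {y-e<..<y+e}"
    unfolding supp_of_def using null by (intro Inter_lower) auto
  then show False using y e by auto
qed

lemma quantile_of_in_supp: assumes "0 < t" "t < 1" shows "quantile_of M t \<in> supp_of M"
proof (rule ccontr)
  let ?z = "quantile_of M t"
  assume "?z \<notin> supp_of M"
  then obtain e where e: "e > 0" "measure M {?z-e<..<?z+e} = 0"
    by (rule notin_supp_imp_null_interval)
  have "?z \<notin> {?z-e<..<?z+e}"
    by (rule quantile_of_notin_flat_interval[OF cdf_eq_on_null_interval[OF e(2)] assms]) auto
  then show False using e by auto
qed

end

abbreviation lborel01 :: "real measure" where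
  "lborel01 \<equiv> restrict_space lborel {0<..<1}"

lemma space_lborel01 [simp]: "space lborel01 = {0<..<1}"
  by (simp add: space_restrict_space)

lemma finite_measure_lborel01: "finite_measure lborel01"
  by (rule finite_measureI) (simp add: emeasure_restrict_space)

lemma set_integral_unit_interval: "(LINT t:{0<..<1}|lborel. f t) = integral\<^sup>L lborel01 (f::real \<Rightarrow> real)"
  unfolding set_lebesgue_integral_def
  using integral_restrict_space[of "{0<..<1::real}" lborel f] by simp

lemma measurable_lborel01_iff_borel:
  "f \<in> measurable lborel01 N \<longleftrightarrow> f \<in> measurable (restrict_space borel {0<..<1}) N"
proof -
  have "sets lborel01 = sets (restrict_space borel {0<..<1})" by (simp add: sets_restrict_space)
  then show ?thesis using measurable_cong_sets[OF _ refl] by metis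
qed

lemma (in real_distribution) measurable_quantile_of: "quantile_of M \<in> borel_measurable lborel01"
  using borel_measurable_mono_on_fnc[OF mono_on_quantile_of] measurable_lborel01_iff_borel by blast

text \<open>The library's pseudo-inverse \<open>I\<close> is the left-continuous quantile function
  \<open>inf {x. t \<le> F x}\<close>; it agrees with the right-continuous \<open>quantile_of\<close> off the countable set of
  discontinuities of \<open>I\<close>, which lets us transfer \<open>distr lborel01 borel I = M\<close>.\<close>

context cdf_distribution
begin

lemma I_le_quantile_of: assumes "0 < t" "t < 1" shows "I t \<le> quantile_of M t"
proof (rule ccontr)
  assume "\<not> ?thesis"
  then obtain x where x: "quantile_of M t < x" "x < I t" using dense by (meson not_le)
  have "t < cdf M x" using cdf_gt_if_quantile_of_less[OF assms x(1)] .
  then have "I t \<le> x" using pseudoinverse[of t x] assms by simp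
  then show False using x by simp
qed

lemma quantile_of_le_I: assumes "0 < t" "t < t'" "t' < 1" shows "quantile_of M t \<le> I t'"
  unfolding quantile_of_def cdf_of_eq_cdf
proof (rule cSup_least)
  show "{x. cdf M x \<le> t} \<noteq> {}" using ex_cdf_le[OF assms(1)] by auto
  fix x assume "x \<in> {x. cdf M x \<le> t}"
  then have "\<not> t' \<le> cdf M x" using assms by auto
  then show "x \<le> I t'" using pseudoinverse[of t' x] assms by simp
qed

lemma quantile_of_eq_I: assumes "0 < t" "t < 1" "isCont I t" shows "quantile_of M t = I t"
proof -
  have lim: "(I \<longlongrightarrow> I t) (at_right t)"
    using assms(3) by (simp add: isCont_def filterlim_at_split)
  have "eventually (\<lambda>t'. quantile_of M t \<le> I t') (at_right t)"
    unfolding eventually_at_right_field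
    by (rule exI[of _ 1]) (use assms quantile_of_le_I in auto)
  then have "quantile_of M t \<le> I t"
    by (rule tendsto_lowerbound[OF lim]) simp
  then show ?thesis using I_le_quantile_of[OF assms(1,2)] by simp
qed

lemma AE_quantile_of_eq_I: "AE t in lborel01. quantile_of M t = I t"
proof -
  have "countable {a\<in>{0<..<1::real}. \<not> isCont I a}"
    by (rule mono_on_ctble_discont_open) (simp, rule mono_I)
  then have "AE t in lborel. t \<notin> {a\<in>{0<..<1::real}. \<not> isCont I a}"
    by (intro AE_not_in countable_imp_null_set_lborel)
  then have "AE t in lborel. t \<in> {0<..<1} \<longrightarrow> quantile_of M t = I t"
    by (rule eventually_mono) (use quantile_of_eq_I in auto)
  then show ?thesis by (subst AE_restrict_space_iff) auto
qed

lemma integrable_comp_quantile_of: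
  fixes g :: "real \<Rightarrow> real"
  assumes g: "g \<in> borel_measurable borel" and int: "integrable M g"
  shows "integrable lborel01 (\<lambda>t. g (quantile_of M t))"
proof -
  have I: "I \<in> borel_measurable lborel01"
    using measurable_CI measurable_lborel01_iff_borel by blast
  have "integrable (distr lborel01 borel I) g" using distr_I_eq_M int by simp
  then have "integrable lborel01 (\<lambda>t. g (I t))" using integrable_distr_eq[OF I g] by simp
  moreover have "AE t in lborel01. g (I t) = g (quantile_of M t)"
    using AE_quantile_of_eq_I by (rule eventually_mono) simp
  ultimately show ?thesis
    using integrable_cong_AE measurable_compose[OF I g]
      measurable_compose[OF measurable_quantile_of g] by blast
qed

end

section \<open>Discrete measures on finitely many points\<close>

lemma sigma_algebra_borel_real: "sigma_algebra UNIV (sets (borel::real measure))"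
  using sets.sigma_algebra_axioms[of "borel::real measure"] by simp

lemma sets_delta_meas [simp]: "sets (delta_meas n p x) = sets borel"
  unfolding delta_meas_def using sigma_algebra.sets_measure_of_eq[OF sigma_algebra_borel_real] by simp

lemma space_delta_meas [simp]: "space (delta_meas n p x) = UNIV"
  unfolding delta_meas_def using sigma_algebra.space_measure_of_eq[OF sigma_algebra_borel_real] by simp

lemma emeasure_delta_meas:
  assumes "A \<in> sets borel"
  shows "emeasure (delta_meas n p x) A = (\<Sum>i=1..n. ennreal (p i) * indicator A (x i))"
  unfolding delta_meas_def
proof (rule emeasure_measure_of_sigma[OF sigma_algebra_borel_real _ _ assms])
  show "positive (sets borel) (\<lambda>A. \<Sum>i = 1..n. ennreal (p i) * indicator A (x i))"
    by (simp add: positive_def)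
  show "countably_additive (sets borel) (\<lambda>A. \<Sum>i = 1..n. ennreal (p i) * indicator A (x i))"
  proof (rule countably_additiveI)
    fix A :: "nat \<Rightarrow> real set" assume A: "disjoint_family A"
    have "(\<Sum>j. \<Sum>i = 1..n. ennreal (p i) * indicator (A j) (x i))
        = (\<Sum>i = 1..n. \<Sum>j. ennreal (p i) * indicator (A j) (x i))"
      by (rule suminf_sum) (rule summableI)
    also have "\<dots> = (\<Sum>i = 1..n. ennreal (p i) * indicator (\<Union>j. A j) (x i))"
      using suminf_indicator[OF A] by simp
    finally show "(\<Sum>j. \<Sum>i = 1..n. ennreal (p i) * indicator (A j) (x i))
        = (\<Sum>i = 1..n. ennreal (p i) * indicator (\<Union>j. A j) (x i))" .
  qed
qed

lemma real_distribution_delta_meas: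
  assumes p: "p \<in> Pi_simplex n"
  shows "real_distribution (delta_meas n p x)"
proof -
  have "emeasure (delta_meas n p x) UNIV = (\<Sum>i=1..n. ennreal (p i))"
    using emeasure_delta_meas[of UNIV] by simp
  also have "\<dots> = 1"
    using p by (subst sum_ennreal) (auto simp: Pi_simplex_def)
  finally have "prob_space (delta_meas n p x)" by (intro prob_spaceI) simp
  then show ?thesis unfolding real_distribution_def real_distribution_axioms_def by simp
qed

lemma cdf_delta_meas:
  assumes p: "p \<in> Pi_simplex n"
  shows "cdf (delta_meas n p x) u = (\<Sum>i=1..n. p i * indicator {..u} (x i))"
proof -
  have nn: "0 \<le> p i * indicator {..u} (x i)" if "i \<in> {1..n}" for i
    using p that by (auto simp: Pi_simplex_def)
  have "emeasure (delta_meas n p x) {..u} = (\<Sum>i=1..n. ennreal (p i) * indicator {..u} (x i))"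
    by (simp add: emeasure_delta_meas)
  also have "\<dots> = (\<Sum>i=1..n. ennreal (p i * indicator {..u} (x i)))"
    using p by (intro sum.cong refl) (auto simp: Pi_simplex_def indicator_def)
  also have "\<dots> = ennreal (\<Sum>i=1..n. p i * indicator {..u} (x i))"
    using nn by (rule sum_ennreal)
  finally have "emeasure (delta_meas n p x) {..u} = ennreal (\<Sum>i=1..n. p i * indicator {..u} (x i))" .
  moreover have "0 \<le> (\<Sum>i=1..n. p i * indicator {..u} (x i))"
    using nn by (rule sum_nonneg)
  ultimately show ?thesis unfolding cdf_def measure_def by simp
qed

lemma abs_quantile_of_delta_meas_le:
  assumes p: "p \<in> Pi_simplex n" and t: "0 < t" "t < 1"
  shows "\<bar>quantile_of (delta_meas n p x) t\<bar> \<le> (\<Sum>i=1..n. \<bar>x i\<bar>) + 1"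
proof -
  interpret real_distribution "delta_meas n p x" by (rule real_distribution_delta_meas[OF p])
  let ?B = "\<Sum>i=1..n. \<bar>x i\<bar>"
  have xb: "x i \<le> ?B" "- ?B - 1 < x i" if "i \<in> {1..n}" for i
    using member_le_sum[of i "{1..n}" "\<lambda>i. \<bar>x i\<bar>"] that by auto
  have "cdf (delta_meas n p x) ?B = (\<Sum>i=1..n. p i)"
    unfolding cdf_delta_meas[OF p] using xb by (intro sum.cong refl) (auto simp: indicator_def)
  then have "quantile_of (delta_meas n p x) t \<le> ?B"
    using p t quantile_of_le by (simp add: Pi_simplex_def)
  moreover have "cdf (delta_meas n p x) (- ?B - 1) = 0"
    unfolding cdf_delta_meas[OF p] using xb by (intro sum.neutral) (force simp: indicator_def)
  then have "- ?B - 1 \<le> quantile_of (delta_meas n p x) t" using le_quantile_of t by simp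
  ultimately show ?thesis by simp
qed

lemma powr_abs_diff_le:
  fixes a b A r :: real
  assumes "\<bar>a\<bar> \<le> A" "r \<ge> 0"
  shows "\<bar>a - b\<bar> powr r \<le> 2 powr r * (A powr r + \<bar>b\<bar> powr r)"
proof -
  have "\<bar>a - b\<bar> \<le> 2 * max A \<bar>b\<bar>" using assms by (auto simp: max_def)
  then have "\<bar>a - b\<bar> powr r \<le> (2 * max A \<bar>b\<bar>) powr r" by (rule powr_mono2[OF assms(2) abs_ge_zero])
  also have "\<dots> = 2 powr r * (max A \<bar>b\<bar>) powr r" using assms by (simp add: powr_mult)
  also have "(max A \<bar>b\<bar>) powr r \<le> A powr r + \<bar>b\<bar> powr r" by (auto simp: max_def)
  finally show ?thesis by simp
qed

lemma integrable_quantile_of_delta_meas_diff: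
  assumes M: "real_distribution M" and int: "integrable M (\<lambda>x. \<bar>x\<bar> powr r)" and r: "r \<ge> 0"
    and p: "p \<in> Pi_simplex n"
  shows "integrable lborel01 (\<lambda>t. \<bar>quantile_of (delta_meas n p x) t - quantile_of M t\<bar> powr r)"
proof -
  interpret cdf_distribution M using M by (simp add: cdf_distribution_def)
  interpret D: real_distribution "delta_meas n p x" by (rule real_distribution_delta_meas[OF p])
  interpret U: finite_measure lborel01 by (rule finite_measure_lborel01)
  define B where "B = (\<Sum>i=1..n. \<bar>x i\<bar>) + 1"
  have "integrable lborel01 (\<lambda>t. \<bar>quantile_of M t\<bar> powr r)"
    by (rule integrable_comp_quantile_of[OF _ int]) measurable
  then have "integrable lborel01 (\<lambda>t. 2 powr r * (B powr r + \<bar>quantile_of M t\<bar> powr r))"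
    by (intro integrable_mult_right integrable_add) auto
  then show ?thesis
  proof (rule Bochner_Integration.integrable_bound)
    show "(\<lambda>t. \<bar>quantile_of (delta_meas n p x) t - quantile_of M t\<bar> powr r) \<in> borel_measurable lborel01"
      using D.measurable_quantile_of measurable_quantile_of by measurable
    show "AE t in lborel01. norm (\<bar>quantile_of (delta_meas n p x) t - quantile_of M t\<bar> powr r)
        \<le> norm (2 powr r * (B powr r + \<bar>quantile_of M t\<bar> powr r))"
      using abs_quantile_of_delta_meas_le[OF p] powr_abs_diff_le[OF _ r]
      by (intro AE_I2) (simp add: B_def)
  qed
qed

section \<open>Distance to a finite set of points\<close>

definition dist_to_points :: "nat \<Rightarrow> (nat \<Rightarrow> real) \<Rightarrow> real \<Rightarrow> real" where
  "dist_to_points n x y = Min ((\<lambda>i. \<bar>y - x i\<bar>) ` {1..n})"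

lemma dist_to_points_le: "j \<in> {1..n} \<Longrightarrow> dist_to_points n x y \<le> \<bar>y - x j\<bar>"
  unfolding dist_to_points_def by (intro Min_le) auto

lemma dist_to_points_attained:
  assumes "1 \<le> n"
  obtains j where "j \<in> {1..n}" "dist_to_points n x y = \<bar>y - x j\<bar>"
proof -
  have "dist_to_points n x y \<in> (\<lambda>i. \<bar>y - x i\<bar>) ` {1..n}"
    unfolding dist_to_points_def using assms by (intro Min_in) auto
  then show ?thesis using that by blast
qed

lemma dist_to_points_nonneg: "1 \<le> n \<Longrightarrow> 0 \<le> dist_to_points n x y"
  by (metis abs_ge_zero dist_to_points_attained)

lemma dist_to_points_less_iff:
  "1 \<le> n \<Longrightarrow> dist_to_points n x y < e \<longleftrightarrow> (\<exists>i\<in>{1..n}. \<bar>y - x i\<bar> < e)"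
  unfolding dist_to_points_def by (simp add: Min_less_iff)

lemma dist_to_points_triangle:
  assumes "1 \<le> n"
  shows "dist_to_points n x q \<le> \<bar>q - y\<bar> + dist_to_points n x y"
proof -
  obtain j where j: "j \<in> {1..n}" "dist_to_points n x y = \<bar>y - x j\<bar>"
    using dist_to_points_attained[OF assms] .
  have "dist_to_points n x q \<le> \<bar>q - x j\<bar>" using j(1) by (rule dist_to_points_le)
  then show ?thesis using j(2) by linarith
qed

lemma tendsto_dist_to_points_zeroI:
  assumes "\<And>e. e > 0 \<Longrightarrow> eventually (\<lambda>n. \<exists>i\<in>{1..n}. \<bar>y - x n i\<bar> < e) sequentially"
  shows "(\<lambda>n. dist_to_points n (x n) y) \<longlonglongrightarrow> 0"
proof (rule order_tendstoI)
  fix a :: real assume "a < 0"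
  show "eventually (\<lambda>n. a < dist_to_points n (x n) y) sequentially"
    using eventually_ge_at_top[of 1]
    by (rule eventually_mono) (use \<open>a < 0\<close> dist_to_points_nonneg in \<open>fastforce intro: less_le_trans\<close>)
next
  fix e :: real assume "e > 0"
  from assms[OF this] eventually_ge_at_top[of 1]
  show "eventually (\<lambda>n. dist_to_points n (x n) y < e) sequentially"
    by eventually_elim (simp add: dist_to_points_less_iff)
qed

section \<open>Lower bound for the distance\<close>

lemma quantile_of_delta_meas_avoids:
  assumes p: "p \<in> Pi_simplex n" and t: "0 < t" "t < 1"
    and far: "\<And>i. i \<in> {1..n} \<Longrightarrow> e \<le> \<bar>y - x i\<bar>"
  shows "quantile_of (delta_meas n p x) t \<notin> {y-e<..<y+e}"
proof -
  interpret real_distribution "delta_meas n p x" by (rule real_distribution_delta_meas[OF p])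
  show ?thesis
  proof (rule quantile_of_notin_flat_interval[OF _ t])
    fix u v assume uv: "u \<in> {y-e<..<y+e}" "v \<in> {y-e<..<y+e}"
    show "cdf (delta_meas n p x) u = cdf (delta_meas n p x) v"
      unfolding cdf_delta_meas[OF p]
    proof (intro sum.cong refl)
      fix i assume "i \<in> {1..n}"
      then have "x i \<le> u \<longleftrightarrow> x i \<le> v" using far[of i] uv by auto
      then show "p i * indicator {..u} (x i) = p i * indicator {..v} (x i)"
        by (simp add: indicator_def)
    qed
  qed
qed

lemma measure_lborel01_interval:
  assumes "0 \<le> a" "a \<le> c" "c \<le> 1"
  shows "measure lborel01 {a<..<c} = c - a"
  using assms by (subst measure_restrict_space) auto

lemma dist_r_delta_meas_ge:
  assumes M: "real_distribution M" and int: "integrable M (\<lambda>x. \<bar>x\<bar> powr r)" and r: "r \<ge> 1"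
    and e: "e > 0" and p: "p \<in> Pi_simplex n" and far: "\<And>i. i \<in> {1..n} \<Longrightarrow> e \<le> \<bar>y - x i\<bar>"
  shows "((e/2) powr r * (cdf M (y+e/2) - cdf M (y-e/2))) powr (1/r) \<le> dist_r r (delta_meas n p x) M"
proof -
  interpret real_distribution M by (rule M)
  define a where "a = cdf M (y-e/2)"
  define c where "c = cdf M (y+e/2)"
  have ac: "0 \<le> a" "a \<le> c" "c \<le> 1"
    using e cdf_nondecreasing by (auto simp: a_def c_def cdf_nonneg cdf_bounded_prob)
  let ?h = "\<lambda>t. \<bar>quantile_of (delta_meas n p x) t - quantile_of M t\<bar> powr r"
  have "(e/2) powr r * indicator {a<..<c} t \<le> ?h t" if t: "0 < t" "t < 1" for t
  proof (cases "t \<in> {a<..<c}")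
    case True
    have "y - e/2 \<le> quantile_of M t" "quantile_of M t \<le> y + e/2"
      using True le_quantile_of[OF t] quantile_of_le[OF t] by (auto simp: a_def c_def)
    moreover have "quantile_of (delta_meas n p x) t \<notin> {y-e<..<y+e}"
      by (rule quantile_of_delta_meas_avoids[OF p t far])
    ultimately have "e/2 \<le> \<bar>quantile_of (delta_meas n p x) t - quantile_of M t\<bar>" by auto
    then show ?thesis using True r e by (simp add: powr_mono2)
  qed simp
  then have "integral\<^sup>L lborel01 (\<lambda>t. (e/2) powr r * indicator {a<..<c} t) \<le> integral\<^sup>L lborel01 ?h"
    using r by (intro integral_mono_AE' integrable_quantile_of_delta_meas_diff[OF M int _ p] AE_I2) auto
  then have "((e/2) powr r * (c - a)) powr (1/r) \<le> (integral\<^sup>L lborel01 ?h) powr (1/r)"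
    using r ac by (intro powr_mono2) (auto simp: measure_lborel01_interval)
  then show ?thesis unfolding dist_r_def set_integral_unit_interval a_def c_def .
qed

lemma Pi_simplex_nonempty: "1 \<le> n \<Longrightarrow> Pi_simplex n \<noteq> {}"
proof -
  assume "1 \<le> n"
  then have "(\<lambda>i. if i = 1 then 1 else 0 :: real) \<in> Pi_simplex n"
    unfolding Pi_simplex_def by (auto simp: sum.delta)
  then show ?thesis by blast
qed

lemma dist_r_nonneg: "0 \<le> dist_r r M N"
  by (simp add: dist_r_def)

lemma dist_r_best_nonneg: "1 \<le> n \<Longrightarrow> 0 \<le> dist_r_best r n x M"
  unfolding dist_r_best_def by (intro cINF_greatest Pi_simplex_nonempty dist_r_nonneg)

lemma dist_r_best_ge:
  assumes M: "real_distribution M" and int: "integrable M (\<lambda>x. \<bar>x\<bar> powr r)" and r: "r \<ge> 1"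
    and e: "e > 0" and n: "1 \<le> n" and far: "\<And>i. i \<in> {1..n} \<Longrightarrow> e \<le> \<bar>y - x i\<bar>"
  shows "((e/2) powr r * (cdf M (y+e/2) - cdf M (y-e/2))) powr (1/r) \<le> dist_r_best r n x M"
  unfolding dist_r_best_def
  by (rule cINF_greatest[OF Pi_simplex_nonempty[OF n]]) (rule dist_r_delta_meas_ge[OF M int r e _ far])

section \<open>Upper bound for the distance\<close>

text \<open>midpoint_cdf M n x i is F(m_i) for the midpoints m_i = (x_i + x_{i+1})/2, with the conventions
  m_0 = -\<infinity> and m_n = +\<infinity>; the weight of x_i is the \<mu>-mass of ]m_{i-1}, m_i].\<close>

definition midpoint_cdf :: "real measure \<Rightarrow> nat \<Rightarrow> (nat \<Rightarrow> real) \<Rightarrow> nat \<Rightarrow> real" where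
  "midpoint_cdf M n x i = (if i = 0 then 0 else if n \<le> i then 1 else cdf M ((x i + x (Suc i)) / 2))"

definition midpoint_weights :: "real measure \<Rightarrow> nat \<Rightarrow> (nat \<Rightarrow> real) \<Rightarrow> nat \<Rightarrow> real" where
  "midpoint_weights M n x i = midpoint_cdf M n x i - midpoint_cdf M n x (i - 1)"

lemma sum_midpoint_weights: "(\<Sum>i=1..k. midpoint_weights M n x i) = midpoint_cdf M n x k"
  by (induction k) (simp_all add: midpoint_weights_def midpoint_cdf_def)

lemma sum_mult_indicator_atMost:
  fixes f :: "nat \<Rightarrow> real"
  assumes "k \<le> n"
  shows "(\<Sum>i=1..n. f i * indicator {..k} i) = (\<Sum>i=1..k. f i)"
proof -
  have "(\<Sum>i=1..n. f i * indicator {..k} i) = (\<Sum>i\<in>{1..n}. if i \<in> {..k} then f i else 0)"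
    by (intro sum.cong) (auto simp: indicator_def)
  also have "\<dots> = (\<Sum>i\<in>{1..n} \<inter> {..k}. f i)"
    by (simp only: sum.inter_restrict[OF finite_atLeastAtMost])
  also have "{1..n} \<inter> {..k} = {1..k}" using assms by auto
  finally show ?thesis .
qed

lemma midpoint_weights_nonneg:
  assumes M: "real_distribution M" and x: "x \<in> Xi n" and i: "i \<in> {1..n}"
  shows "0 \<le> midpoint_weights M n x i"
proof -
  interpret real_distribution M by (rule M)
  consider "i = 1" | "n \<le> i" "2 \<le> i" | "i < n" "2 \<le> i" using i by fastforce
  then show ?thesis
  proof cases
    case 3
    have "x (i - 1) \<le> x i" "x i \<le> x (Suc i)" using x i 3 unfolding Xi_def by auto
    then have "cdf M ((x (i - 1) + x (Suc (i - 1))) / 2) \<le> cdf M ((x i + x (Suc i)) / 2)"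
      using 3 by (intro cdf_nondecreasing) simp
    then show ?thesis using 3 by (auto simp: midpoint_weights_def midpoint_cdf_def)
  qed (auto simp: midpoint_weights_def midpoint_cdf_def cdf_nonneg cdf_bounded_prob)
qed

lemma midpoint_weights_in_Pi_simplex:
  assumes M: "real_distribution M" and x: "x \<in> Xi n" and n: "1 \<le> n"
  shows "midpoint_weights M n x \<in> Pi_simplex n"
  unfolding Pi_simplex_def
  using midpoint_weights_nonneg[OF M x] sum_midpoint_weights[where k=n] n
  by (auto simp: midpoint_cdf_def)

lemma cdf_delta_midpoint_le:
  assumes M: "real_distribution M" and x: "x \<in> Xi n" and n: "1 \<le> n" and k: "k \<le> n"
    and below: "\<And>i. i \<in> {1..n} \<Longrightarrow> x i \<le> u \<Longrightarrow> i \<le> k"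
  shows "cdf (delta_meas n (midpoint_weights M n x) x) u \<le> midpoint_cdf M n x k"
proof -
  have "cdf (delta_meas n (midpoint_weights M n x) x) u
      = (\<Sum>i=1..n. midpoint_weights M n x i * indicator {..u} (x i))"
    by (rule cdf_delta_meas[OF midpoint_weights_in_Pi_simplex[OF M x n]])
  also have "\<dots> \<le> (\<Sum>i=1..n. midpoint_weights M n x i * indicator {..k} i)"
    using below midpoint_weights_nonneg[OF M x] by (intro sum_mono) (auto simp: indicator_def)
  also have "\<dots> = midpoint_cdf M n x k"
    using sum_mult_indicator_atMost[OF k] sum_midpoint_weights by simp
  finally show ?thesis .
qed

lemma cdf_delta_midpoint_ge:
  assumes M: "real_distribution M" and x: "x \<in> Xi n" and n: "1 \<le> n" and k: "k \<le> n"
    and above: "\<And>i. i \<in> {1..n} \<Longrightarrow> i \<le> k \<Longrightarrow> x i \<le> u"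
  shows "midpoint_cdf M n x k \<le> cdf (delta_meas n (midpoint_weights M n x) x) u"
proof -
  have "midpoint_cdf M n x k = (\<Sum>i=1..n. midpoint_weights M n x i * indicator {..k} i)"
    using sum_mult_indicator_atMost[OF k] sum_midpoint_weights by simp
  also have "\<dots> \<le> (\<Sum>i=1..n. midpoint_weights M n x i * indicator {..u} (x i))"
    using above midpoint_weights_nonneg[OF M x] by (intro sum_mono) (auto simp: indicator_def)
  also have "\<dots> = cdf (delta_meas n (midpoint_weights M n x) x) u"
    by (rule cdf_delta_meas[OF midpoint_weights_in_Pi_simplex[OF M x n], symmetric])
  finally show ?thesis .
qed

lemma Xi_mono: "x \<in> Xi n \<Longrightarrow> 1 \<le> i \<Longrightarrow> i \<le> j \<Longrightarrow> j \<le> n \<Longrightarrow> x i \<le> x j"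
  unfolding Xi_def by blast

text \<open>Write q = Q_\<mu>(t). The last point x_k \<le> q + d has its right midpoint beyond q (or k = n),
  so the discrete measure puts mass greater than t on ]-\<infinity>, x_k].\<close>

lemma quantile_of_delta_midpoint_le:
  assumes M: "real_distribution M" and x: "x \<in> Xi n" and t: "0 < t" "t < 1"
    and j: "j \<in> {1..n}" "\<bar>quantile_of M t - x j\<bar> \<le> d"
  shows "quantile_of (delta_meas n (midpoint_weights M n x) x) t \<le> quantile_of M t + d"
proof -
  interpret real_distribution M by (rule M)
  have n: "1 \<le> n" using j by simp
  interpret D: real_distribution "delta_meas n (midpoint_weights M n x) x"
    by (rule real_distribution_delta_meas[OF midpoint_weights_in_Pi_simplex[OF M x n]])
  define q where "q = quantile_of M t"
  define U where "U = {i\<in>{1..n}. x i \<le> q + d}"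
  define k where "k = Max U"
  have "finite U" "j \<in> U" using j by (auto simp: U_def q_def)
  then have kU: "k \<in> U" and jk: "j \<le> k" and kmax: "Suc k \<notin> U"
    unfolding k_def by (auto intro: Max_in dest: Max_ge)
  have "t < midpoint_cdf M n x k"
  proof (cases "n \<le> k")
    case False
    then have "q + d < x (Suc k)" using kU kmax by (auto simp: U_def)
    moreover have "q - d \<le> x k"
      using Xi_mono[OF x, of j k] j jk kU by (auto simp: U_def q_def)
    ultimately have "q < (x k + x (Suc k)) / 2" by simp
    then show ?thesis
      using cdf_gt_if_quantile_of_less[OF t] False kU by (auto simp: midpoint_cdf_def U_def q_def)
  qed (use kU t in \<open>auto simp: midpoint_cdf_def U_def\<close>)
  also have "midpoint_cdf M n x k \<le> cdf (delta_meas n (midpoint_weights M n x) x) (x k)"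
    by (rule cdf_delta_midpoint_ge[OF M x n]) (use kU Xi_mono[OF x] in \<open>auto simp: U_def\<close>)
  finally have "quantile_of (delta_meas n (midpoint_weights M n x) x) t \<le> x k"
    by (rule D.quantile_of_le[OF t])
  then show ?thesis using kU by (simp add: U_def q_def)
qed

lemma quantile_of_delta_midpoint_ge:
  assumes M: "real_distribution M" and x: "x \<in> Xi n" and t: "0 < t" "t < 1"
    and j: "j \<in> {1..n}" "\<bar>quantile_of M t - x j\<bar> \<le> d"
  shows "quantile_of M t - d \<le> quantile_of (delta_meas n (midpoint_weights M n x) x) t"
proof -
  interpret real_distribution M by (rule M)
  have n: "1 \<le> n" using j by simp
  interpret D: real_distribution "delta_meas n (midpoint_weights M n x) x"
    by (rule real_distribution_delta_meas[OF midpoint_weights_in_Pi_simplex[OF M x n]])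
  let ?Q = "quantile_of (delta_meas n (midpoint_weights M n x) x) t"
  define q where "q = quantile_of M t"
  define L where "L = {i\<in>{1..n}. q - d \<le> x i}"
  define l where "l = Min L"
  have "finite L" "j \<in> L" using j by (auto simp: L_def q_def)
  then have lL: "l \<in> L" and lmin: "\<And>i. i \<in> L \<Longrightarrow> l \<le> i"
    unfolding l_def by (auto intro: Min_in)
  have lj: "l \<le> j" using lmin \<open>j \<in> L\<close> .
  have "midpoint_cdf M n x (l - 1) \<le> t"
  proof (cases "l = 1")
    case False
    then have "x (l - 1) < q - d" using lL lmin[of "l - 1"] by (force simp: L_def)
    moreover have "x l \<le> q + d"
      using Xi_mono[OF x, of l j] j lj lL by (auto simp: L_def q_def)
    ultimately have "(x (l - 1) + x (Suc (l - 1))) / 2 < q" using False lL by (auto simp: L_def)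
    then show ?thesis
      using cdf_le_if_less_quantile_of[OF t] False lL by (auto simp: midpoint_cdf_def L_def q_def)
  qed (use t in \<open>simp add: midpoint_cdf_def\<close>)
  then have "u \<le> ?Q" if "u < x l" for u
  proof -
    have "cdf (delta_meas n (midpoint_weights M n x) x) u \<le> midpoint_cdf M n x (l - 1)"
    proof (rule cdf_delta_midpoint_le[OF M x n])
      fix i assume "i \<in> {1..n}" "x i \<le> u"
      then show "i \<le> l - 1" using that Xi_mono[OF x, of l i] lL by (force simp: L_def)
    qed (use lL in \<open>auto simp: L_def\<close>)
    then show ?thesis using \<open>midpoint_cdf M n x (l - 1) \<le> t\<close> D.le_quantile_of[OF t] by simp
  qed
  then have "x l \<le> ?Q" by (meson dense not_le)
  then show ?thesis using lL by (simp add: L_def q_def)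
qed

lemma quantile_of_delta_midpoint_close:
  assumes M: "real_distribution M" and x: "x \<in> Xi n" and n: "1 \<le> n" and t: "0 < t" "t < 1"
  shows "\<bar>quantile_of (delta_meas n (midpoint_weights M n x) x) t - quantile_of M t\<bar>
          \<le> dist_to_points n x (quantile_of M t)"
proof -
  obtain j where j: "j \<in> {1..n}" "dist_to_points n x (quantile_of M t) = \<bar>quantile_of M t - x j\<bar>"
    using dist_to_points_attained[OF n] .
  then show ?thesis
    using quantile_of_delta_midpoint_le[OF M x t j(1)] quantile_of_delta_midpoint_ge[OF M x t j(1)]
    by fastforce
qed

lemma dist_to_points_powr_le:
  assumes n: "1 \<le> n" and y: "dist_to_points n x y \<le> c" and r: "0 \<le> r"
  shows "dist_to_points n x q powr r \<le> 2 powr r * ((\<bar>y\<bar> + c) powr r + \<bar>q\<bar> powr r)"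
proof -
  have c: "0 \<le> c" using dist_to_points_nonneg[OF n] y by (rule order_trans)
  have "dist_to_points n x q \<le> \<bar>(\<bar>y\<bar> + c) - (- \<bar>q\<bar>)\<bar>"
    using dist_to_points_triangle[OF n, of x q y] y c by linarith
  then have "dist_to_points n x q powr r \<le> \<bar>(\<bar>y\<bar> + c) - (- \<bar>q\<bar>)\<bar> powr r"
    using dist_to_points_nonneg[OF n] r by (intro powr_mono2) auto
  also have "\<dots> \<le> 2 powr r * ((\<bar>y\<bar> + c) powr r + \<bar>- \<bar>q\<bar>\<bar> powr r)"
    using c r by (intro powr_abs_diff_le) auto
  finally show ?thesis by simp
qed

lemma integrable_dist_to_points_quantile_of:
  assumes M: "real_distribution M" and int: "integrable M (\<lambda>x. \<bar>x\<bar> powr r)" and r: "r \<ge> 0"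
    and n: "1 \<le> n"
  shows "integrable lborel01 (\<lambda>t. dist_to_points n x (quantile_of M t) powr r)"
proof -
  interpret cdf_distribution M using M by (simp add: cdf_distribution_def)
  interpret U: finite_measure lborel01 by (rule finite_measure_lborel01)
  have "integrable lborel01 (\<lambda>t. \<bar>quantile_of M t\<bar> powr r)"
    by (rule integrable_comp_quantile_of[OF _ int]) measurable
  then have "integrable lborel01 (\<lambda>t. 2 powr r * (\<bar>x 1\<bar> powr r + \<bar>quantile_of M t\<bar> powr r))"
    by (intro integrable_mult_right integrable_add) auto
  then show ?thesis
  proof (rule Bochner_Integration.integrable_bound)
    show "(\<lambda>t. dist_to_points n x (quantile_of M t) powr r) \<in> borel_measurable lborel01"
      unfolding dist_to_points_def using measurable_quantile_of by measurable
    have "dist_to_points n x (x 1) \<le> 0" using dist_to_points_le[of 1 n x "x 1"] n by simp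
    then have "dist_to_points n x q powr r \<le> 2 powr r * (\<bar>x 1\<bar> powr r + \<bar>q\<bar> powr r)" for q
      using dist_to_points_powr_le[OF n _ r] by fastforce
    then show "AE t in lborel01. norm (dist_to_points n x (quantile_of M t) powr r)
        \<le> norm (2 powr r * (\<bar>x 1\<bar> powr r + \<bar>quantile_of M t\<bar> powr r))"
      by (intro AE_I2) simp
  qed
qed

lemma dist_r_best_le_dist_to_points:
  assumes M: "real_distribution M" and int: "integrable M (\<lambda>x. \<bar>x\<bar> powr r)" and r: "r \<ge> 1"
    and x: "x \<in> Xi n" and n: "1 \<le> n"
  shows "dist_r_best r n x M
      \<le> (integral\<^sup>L lborel01 (\<lambda>t. dist_to_points n x (quantile_of M t) powr r)) powr (1/r)"
proof -
  let ?p = "midpoint_weights M n x"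
  have "dist_r_best r n x M \<le> dist_r r (delta_meas n ?p x) M"
    unfolding dist_r_best_def using midpoint_weights_in_Pi_simplex[OF M x n]
    by (intro cINF_lower bdd_belowI[of _ 0]) (auto simp: dist_r_nonneg)
  also have "\<dots> = (integral\<^sup>L lborel01
      (\<lambda>t. \<bar>quantile_of (delta_meas n ?p x) t - quantile_of M t\<bar> powr r)) powr (1/r)"
    unfolding dist_r_def set_integral_unit_interval ..
  also have "\<dots> \<le> (integral\<^sup>L lborel01 (\<lambda>t. dist_to_points n x (quantile_of M t) powr r)) powr (1/r)"
    using r quantile_of_delta_midpoint_close[OF M x n]
    by (intro powr_mono2 integral_nonneg_AE integral_mono_AE' AE_I2
        integrable_dist_to_points_quantile_of[OF M int _ n]) auto
  finally show ?thesis .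
qed

text \<open>The domination comes from a single support point y_0 that is eventually within
  distance 1 of the points.\<close>

lemma tendsto_integral_dist_to_points:
  assumes M: "real_distribution M" and int: "integrable M (\<lambda>x. \<bar>x\<bar> powr r)" and r: "r \<ge> 1"
    and near: "\<forall>y\<in>supp_of M. (\<lambda>n. dist_to_points n (x n) y) \<longlonglongrightarrow> 0"
  shows "(\<lambda>n. integral\<^sup>L lborel01 (\<lambda>t. dist_to_points n (x n) (quantile_of M t) powr r)) \<longlonglongrightarrow> 0"
proof -
  interpret cdf_distribution M using M by (simp add: cdf_distribution_def)
  interpret U: finite_measure lborel01 by (rule finite_measure_lborel01)
  define y0 where "y0 = quantile_of M (1/2)"
  have "y0 \<in> supp_of M" unfolding y0_def by (rule quantile_of_in_supp) auto
  then have "eventually (\<lambda>n. dist_to_points n (x n) y0 < 1) sequentially"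
    using near by (auto intro: order_tendstoD)
  then have "eventually (\<lambda>n. dist_to_points n (x n) y0 < 1 \<and> 1 \<le> n) sequentially"
    using eventually_ge_at_top[of 1] by (rule eventually_conj)
  then obtain N where N: "\<And>n. n \<ge> N \<Longrightarrow> dist_to_points n (x n) y0 < 1 \<and> 1 \<le> n"
    by (auto simp: eventually_sequentially)
  define s where "s i t = dist_to_points (i + N) (x (i + N)) (quantile_of M t) powr r" for i t
  define w where "w t = 2 powr r * ((\<bar>y0\<bar> + 1) powr r + \<bar>quantile_of M t\<bar> powr r)" for t
  have "integrable lborel01 (\<lambda>t. \<bar>quantile_of M t\<bar> powr r)"
    by (rule integrable_comp_quantile_of[OF _ int]) measurable
  then have "integrable lborel01 w"
    unfolding w_def by (intro integrable_mult_right integrable_add) auto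
  moreover have "s i \<in> borel_measurable lborel01" for i
    unfolding s_def dist_to_points_def using measurable_quantile_of by measurable
  moreover have "AE t in lborel01. (\<lambda>i. s i t) \<longlonglongrightarrow> 0"
  proof (rule AE_I2)
    fix t assume "t \<in> space lborel01"
    then have "quantile_of M t \<in> supp_of M" by (intro quantile_of_in_supp) auto
    then have "(\<lambda>i. dist_to_points (i + N) (x (i + N)) (quantile_of M t)) \<longlonglongrightarrow> 0"
      using near LIMSEQ_ignore_initial_segment by blast
    then show "(\<lambda>i. s i t) \<longlonglongrightarrow> 0"
      unfolding s_def using r N dist_to_points_nonneg by (intro tendsto_zero_powrI) auto
  qed
  moreover have "AE t in lborel01. norm (s i t) \<le> w t" for i
    unfolding s_def w_def using N[of "i + N"] r
    by (intro AE_I2) (auto intro: dist_to_points_powr_le)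
  ultimately have "(\<lambda>i. integral\<^sup>L lborel01 (s i)) \<longlonglongrightarrow> integral\<^sup>L lborel01 (\<lambda>_. 0::real)"
    by (intro integral_dominated_convergence[where w=w]) auto
  then show ?thesis unfolding s_def by (simp add: LIMSEQ_offset[where k=N])
qed

lemma tendsto_dist_r_best_imp_dense:
  assumes M: "real_distribution M" and int: "integrable M (\<lambda>x. \<bar>x\<bar> powr r)" and r: "r \<ge> 1"
    and lim: "(\<lambda>n. dist_r_best r n (x n) M) \<longlonglongrightarrow> 0" and y: "y \<in> supp_of M"
  shows "(\<lambda>n. dist_to_points n (x n) y) \<longlonglongrightarrow> 0"
proof (rule tendsto_dist_to_points_zeroI)
  fix e :: real assume e: "e > 0"
  interpret real_distribution M by (rule M)
  define c where "c = ((e/2) powr r * (cdf M (y+e/2) - cdf M (y-e/2))) powr (1/r)"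
  have "measure M {y-e/2<..<y+e/2} \<le> measure M {y-e/2<..y+e/2}"
    by (rule finite_measure_mono) auto
  moreover have "measure M {y-e/2<..y+e/2} = cdf M (y+e/2) - cdf M (y-e/2)"
    using e by (intro cdf_diff_eq[symmetric]) auto
  ultimately have "c > 0"
    using measure_interval_pos_if_in_supp[OF y, of "e/2"] e unfolding c_def by simp
  with lim have "eventually (\<lambda>n. dist_r_best r n (x n) M < c) sequentially"
    by (rule order_tendstoD)
  with eventually_ge_at_top[of 1]
  show "eventually (\<lambda>n. \<exists>i\<in>{1..n}. \<bar>y - x n i\<bar> < e) sequentially"
  proof eventually_elim
    case (elim n)
    show ?case
    proof (rule ccontr)
      assume "\<not> ?case"
      then have "c \<le> dist_r_best r n (x n) M"
        unfolding c_def using elim by (intro dist_r_best_ge[OF M int r e]) (auto simp: not_less)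
      with elim show False by simp
    qed
  qed
qed

lemma dense_imp_tendsto_dist_r_best:
  assumes M: "real_distribution M" and int: "integrable M (\<lambda>x. \<bar>x\<bar> powr r)" and r: "r \<ge> 1"
    and x: "\<And>n. x n \<in> Xi n"
    and near: "\<forall>y\<in>supp_of M. (\<lambda>n. dist_to_points n (x n) y) \<longlonglongrightarrow> 0"
  shows "(\<lambda>n. dist_r_best r n (x n) M) \<longlonglongrightarrow> 0"
proof -
  let ?J = "\<lambda>n. integral\<^sup>L lborel01 (\<lambda>t. dist_to_points n (x n) (quantile_of M t) powr r)"
  have "?J \<longlonglongrightarrow> 0" by (rule tendsto_integral_dist_to_points[OF M int r near])
  then have upper: "(\<lambda>n. ?J n powr (1/r)) \<longlonglongrightarrow> 0"
    using r by (intro tendsto_zero_powrI always_eventually integral_nonneg_AE AE_I2) auto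
  have "eventually (\<lambda>n. 0 \<le> dist_r_best r n (x n) M) sequentially"
    using eventually_ge_at_top[of 1] by (rule eventually_mono) (rule dist_r_best_nonneg)
  moreover have "eventually (\<lambda>n. dist_r_best r n (x n) M \<le> ?J n powr (1/r)) sequentially"
    using eventually_ge_at_top[of 1]
    by (rule eventually_mono) (rule dist_r_best_le_dist_to_points[OF M int r x])
  ultimately show ?thesis by (rule tendsto_sandwich[OF _ _ tendsto_const upper])
qed

lemma sorted_points_near:
  assumes x: "x \<in> Xi n" and n: "1 \<le> n"
    and first: "x 1 < y + e" and last: "y - e < x n"
    and gaps: "\<And>i. i \<in> {1..n-1} \<Longrightarrow> x (i + 1) - x i < e"
  shows "\<exists>i\<in>{1..n}. \<bar>y - x i\<bar> < e"
proof -
  consider "y \<le> x 1" | "x n \<le> y" | "x 1 < y" "y < x n" by fastforce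
  then show ?thesis
  proof cases
    case 3
    define K where "K = {i\<in>{1..n}. x i \<le> y}"
    define k where "k = Max K"
    have "finite K" "1 \<in> K" using 3 n by (auto simp: K_def)
    then have kK: "k \<in> K" and kmax: "Suc k \<notin> K" unfolding k_def by (auto intro: Max_in dest: Max_ge)
    then have "k < n" using 3 by (auto simp: K_def le_less)
    then have "y < x (k + 1)" "x (k + 1) - x k < e" using kK kmax gaps[of k] by (auto simp: K_def)
    then show ?thesis using kK by (intro bexI[of _ k]) (auto simp: K_def)
  qed (use first last n in \<open>auto intro: bexI[of _ 1] bexI[of _ n]\<close>)
qed

lemma (in real_distribution) less_if_cdf_less_measure_interval:
  assumes "cdf M a < measure M {y-e<..<y+e}"
  shows "a < y + e"
proof (rule ccontr)
  assume "\<not> ?thesis"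
  then have "measure M {y-e<..<y+e} \<le> cdf M a"
    unfolding cdf_def by (intro finite_measure_mono) auto
  with assms show False by simp
qed

lemma (in real_distribution) greater_if_ccdf_less_measure_interval:
  assumes "1 - cdf M b < measure M {y-e<..<y+e}"
  shows "y - e < b"
proof (rule ccontr)
  assume "\<not> ?thesis"
  then have "measure M {y-e<..<y+e} \<le> measure M (space M - {..b})"
    by (intro finite_measure_mono) auto
  also have "\<dots> = 1 - cdf M b" unfolding cdf_def by (rule prob_compl) simp
  finally show False using assms by simp
qed

lemma small_gaps_imp_dense:
  assumes M: "real_distribution M" and x: "\<And>n. x n \<in> Xi n"
    and gaps: "(\<lambda>n. cdf_of M (x n 1) + Max ((\<lambda>i. x n (i + 1) - x n i) ` {1..n-1})
                + 1 - cdf_of M (x n n)) \<longlonglongrightarrow> 0"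
    and y: "y \<in> supp_of M"
  shows "(\<lambda>n. dist_to_points n (x n) y) \<longlonglongrightarrow> 0"
proof (rule tendsto_dist_to_points_zeroI)
  fix e :: real assume e: "e > 0"
  interpret real_distribution M by (rule M)
  define m where "m = measure M {y-e<..<y+e}"
  have "m > 0" unfolding m_def by (rule measure_interval_pos_if_in_supp[OF y e])
  with gaps e have "eventually (\<lambda>n. cdf_of M (x n 1) + Max ((\<lambda>i. x n (i + 1) - x n i) ` {1..n-1})
                + 1 - cdf_of M (x n n) < min m e) sequentially"
    by (intro order_tendstoD) auto
  with eventually_ge_at_top[of 2]
  show "eventually (\<lambda>n. \<exists>i\<in>{1..n}. \<bar>y - x n i\<bar> < e) sequentially"
  proof eventually_elim
    case (elim n)
    let ?g = "Max ((\<lambda>i. x n (i + 1) - x n i) ` {1..n-1})"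
    have gap_le: "x n (i + 1) - x n i \<le> ?g" if "i \<in> {1..n-1}" for i
      using that by (intro Max_ge) auto
    have "x n 1 \<le> x n (1 + 1)" using Xi_mono[OF x[of n], of 1 "1 + 1"] elim by simp
    moreover have "x n (1 + 1) - x n 1 \<le> ?g" using elim by (intro gap_le) auto
    ultimately have "0 \<le> ?g" by linarith
    moreover have "0 \<le> cdf_of M (x n 1)" "cdf_of M (x n n) \<le> 1"
      unfolding cdf_of_eq_cdf by (auto simp: cdf_nonneg cdf_bounded_prob)
    moreover have "cdf M (x n 1) + ?g + 1 - cdf M (x n n) < m" "cdf M (x n 1) + ?g + 1 - cdf M (x n n) < e"
      using elim(2) unfolding cdf_of_eq_cdf min_less_iff_conj by blast+
    ultimately have small: "cdf M (x n 1) < m" "?g < e" "1 - cdf M (x n n) < m"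
      unfolding cdf_of_eq_cdf by linarith+
    have "x n 1 < y + e" "y - e < x n n"
      using small unfolding m_def
      by (auto intro: less_if_cdf_less_measure_interval greater_if_ccdf_less_measure_interval)
    then show ?case
      using elim small gap_le by (intro sorted_points_near[OF x]) fastforce+
  qed
qed

theorem theorem5p3:
  fixes r :: real and \<mu> :: "real measure" and x :: "nat \<Rightarrow> nat \<Rightarrow> real"
  assumes "r \<ge> 1"
    and "prob_moment r \<mu>"
    and "\<And>n. x n \<in> Xi n"
  shows "(((\<lambda>n. dist_r_best r n (x n) \<mu>) \<longlonglongrightarrow> 0) \<longleftrightarrow>
           (\<forall>y\<in>supp_of \<mu>. (\<lambda>n. Min ((\<lambda>i. \<bar>y - x n i\<bar>) ` {1..n})) \<longlonglongrightarrow> 0))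
       \<and> ((\<lambda>n. cdf_of \<mu> (x n 1) + Max ((\<lambda>i. x n (i + 1) - x n i) ` {1..n-1})
                + 1 - cdf_of \<mu> (x n n)) \<longlonglongrightarrow> 0
          \<longrightarrow> (\<forall>y\<in>supp_of \<mu>. (\<lambda>n. Min ((\<lambda>i. \<bar>y - x n i\<bar>) ` {1..n})) \<longlonglongrightarrow> 0))"
proof -
  have M: "real_distribution \<mu>" and int: "integrable \<mu> (\<lambda>x. \<bar>x\<bar> powr r)"
    using assms(2) prob_real_imp_real_distribution unfolding prob_moment_def by auto
  show ?thesis
    unfolding dist_to_points_def[symmetric]
    using tendsto_dist_r_best_imp_dense[OF M int assms(1)]
      dense_imp_tendsto_dist_r_best[OF M int assms(1,3)] small_gaps_imp_dense[OF M assms(3)]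
    by blast
qed

end
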